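(* Let $\mathbf a=(a_1,\dots,a_k)$ be a sequence of nonnegative integers with $\sum_i a_i=n$, and let $0\le j\le k$. Then $|D_j(\mathbf a)|$ equals the coefficient of $x_1^{a_1}\cdots x_k^{a_k}$ in the power series expansion of \[ \frac{1}{(1+x_1)\cdots(1+x_j)(1-x_1-\dots-x_k)}. \]
   Context: For $\mathbf a=(a_1,\dots,a_k)$ with nonnegative integer entries summing to $n$, put $c_0=0$, $c_j=a_1+\dots+a_j$, and let the $j$-th block be $A_j=\{c_{j-1}+1,\dots,c_j\}\subseteq[n]$ (possibly empty). Let $S_{\mathbf a}\subseteq S_n$ be the set of permutations $\pi$ of $[n]$ such that $\pi_i>\pi_{i+1}$ whenever $i$ and $i+1$ lie in the same block (no condition when they lie in different blocks). A fixed point of $\pi$ is an $i$ with $\pi_i=i$. $D_j(\mathbf a)$ denotes the set of permutations in $S_{\mathbf a}$ having no fixed point in $A_1\cup\dots\cup A_j$. *)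

theory Defs
  imports "HOL-Combinatorics.Permutations"
begin

definition blk :: "nat list \<Rightarrow> nat \<Rightarrow> nat set" where
  "blk a j = {sum_list (take (j - 1) a) + 1 .. sum_list (take j a)}"

definition same_block :: "nat list \<Rightarrow> nat \<Rightarrow> nat \<Rightarrow> bool" where
  "same_block a x y \<longleftrightarrow> (\<exists>j\<in>{1..length a}. x \<in> blk a j \<and> y \<in> blk a j)"

definition S_a :: "nat list \<Rightarrow> (nat \<Rightarrow> nat) set" where
  "S_a a = {\<pi>. \<pi> permutes {1..sum_list a} \<and>
                (\<forall>i. same_block a i (i + 1) \<longrightarrow> \<pi> i > \<pi> (i + 1))}"

definition D_a :: "nat \<Rightarrow> nat list \<Rightarrow> (nat \<Rightarrow> nat) set" where
  "D_a j a = {\<pi> \<in> S_a a. \<forall>i \<in> (\<Union>m\<in>{1..j}. blk a m). \<pi> i \<noteq> i}"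

text \<open>A series is a coefficient function on exponent vectors e :: nat \<Rightarrow> nat;
  variable x_(i+1) corresponds to index i.  Multiplication is the Cauchy product.\<close>
type_synonym mser = "(nat \<Rightarrow> nat) \<Rightarrow> int"

definition ms_mult :: "mser \<Rightarrow> mser \<Rightarrow> mser" where
  "ms_mult f g = (\<lambda>e. \<Sum>d\<in>{d. \<forall>i. d i \<le> e i}. f d * g (\<lambda>i. e i - d i))"

definition ms_one :: mser where
  "ms_one = (\<lambda>e. if e = (\<lambda>_. 0) then 1 else 0)"

definition ms_var :: "nat \<Rightarrow> mser" where
  "ms_var i = (\<lambda>e. if e = (\<lambda>_. 0)(i := 1) then 1 else 0)"

definition one_plus_var :: "nat \<Rightarrow> mser" where
  "one_plus_var i = (\<lambda>e. ms_one e + ms_var i e)"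

definition one_minus_sum :: "nat \<Rightarrow> mser" where
  "one_minus_sum k = (\<lambda>e. ms_one e - (\<Sum>i<k. ms_var i e))"

fun denom :: "nat \<Rightarrow> nat \<Rightarrow> mser" where
  "denom 0 k = one_minus_sum k"
| "denom (Suc j) k = ms_mult (one_plus_var j) (denom j k)"

text \<open>Only exponent vectors
  of finite support are genuine monomials; the coefficient function is normalised to 0
  on the others so that the inverse is unique.\<close>
definition ms_inverse :: "mser \<Rightarrow> mser" where
  "ms_inverse f = (THE g. ms_mult f g = ms_one \<and>
                          (\<forall>e. infinite {i. e i \<noteq> 0} \<longrightarrow> g e = 0))"

definition expvec :: "nat list \<Rightarrow> nat \<Rightarrow> nat" where
  "expvec a = (\<lambda>i. if i < length a then a ! i else 0)"

end

theory Submission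
  imports Defs
begin

text \<open>A permutation in \<open>S_a a\<close> decreases along every block. Hence its largest value \<open>n\<close> sits at the
  first position of a nonempty block, and deleting that position and standardising gives
  \<open>|S_a| = \<Sum>\<^sub>i |S_(a - e_i)|\<close>, i.e. \<open>(1 - x_1 - \<dots> - x_k) F_0 = 1\<close> for the generating series
  \<open>F_j\<close> of \<open>|D_j(a)|\<close>. For the same reason a permutation has at most one fixed point per block.
  Deleting the fixed point in block \<open>m + 1\<close> of a permutation counted by \<open>D_m\<close> but not by \<open>D_(m+1)\<close>
  gives a permutation in \<open>D_(m+1)(a - e_(m+1))\<close> that splits at the deleted point, and every such
  permutation splits at exactly one point; so \<open>F_m = (1 + x_(m+1)) F_(m+1)\<close>. Multiplying out,
  \<open>(1 + x_1) \<dots> (1 + x_j)(1 - x_1 - \<dots> - x_k) F_j = 1\<close>, and inverses of series with constant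
  term \<open>1\<close> are unique.\<close>

abbreviation block_end :: "nat list \<Rightarrow> nat \<Rightarrow> nat" where
  "block_end a j \<equiv> sum_list (take j a)"

lemma block_end_Suc: "block_end a (Suc j) = block_end a j + (if j < length a then a ! j else 0)"
  by (simp add: take_Suc_conv_app_nth)

lemma block_end_mono: "j \<le> j' \<Longrightarrow> block_end a j \<le> block_end a j'"
proof (induction j' rule: dec_induct)
  case (step n)
  then show ?case using block_end_Suc[where a=a and j=n] by simp
qed simp

lemma block_end_le_sum_list: "block_end a j \<le> sum_list a"
  by (metis append_take_drop_id le_add1 sum_list_append)

lemma blk_Suc: "blk a (Suc i) = {block_end a i + 1 .. block_end a (Suc i)}"
  by (simp add: blk_def)

lemma blk_Suc_eq: "i < length a \<Longrightarrow> blk a (Suc i) = {block_end a i + 1 .. block_end a i + a ! i}"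
  by (simp add: blk_Suc block_end_Suc)

lemma blk_subset: "blk a m \<subseteq> {1..sum_list a}"
  using block_end_le_sum_list[where a=a and j=m] by (cases m) (auto simp: blk_def)

lemma ex_blk:
  assumes "x \<in> {1..sum_list a}"
  shows "\<exists>i<length a. x \<in> blk a (Suc i)"
proof -
  have ex: "\<exists>j. x \<le> block_end a j" using assms by (intro exI[of _ "length a"]) simp
  define j where "j = (LEAST j. x \<le> block_end a j)"
  have j: "x \<le> block_end a j" unfolding j_def using LeastI_ex[OF ex] .
  have "j \<le> length a" unfolding j_def using assms by (intro Least_le) simp
  moreover have "j \<noteq> 0" using j assms by (cases j) auto
  then obtain i where i: "j = Suc i" by (cases j) auto
  moreover have "\<not> x \<le> block_end a i" using i not_less_Least[of i "\<lambda>j. x \<le> block_end a j"] j_def by auto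
  ultimately show ?thesis using j by (auto simp: blk_Suc intro!: exI[of _ i])
qed

lemma blk_unique:
  assumes "x \<in> blk a m" "x \<in> blk a m'"
  shows "m = m'"
proof (rule ccontr)
  assume "m \<noteq> m'"
  have "blk a 0 = {}" by (simp add: blk_def)
  then have "m \<noteq> 0" "m' \<noteq> 0" using assms by (metis empty_iff)+
  then obtain i i' where ii: "m = Suc i" "m' = Suc i'" by (metis not0_implies_Suc)
  have False if "i < i'" "x \<in> blk a (Suc i)" "x \<in> blk a (Suc i')" for i i'
    using that block_end_mono[of "Suc i" i' a] by (auto simp: blk_Suc)
  then show False using assms ii \<open>m \<noteq> m'\<close> by (metis linorder_neqE_nat)
qed

lemma same_block_SucI:
  "m < length a \<Longrightarrow> x \<in> blk a (Suc m) \<Longrightarrow> y \<in> blk a (Suc m) \<Longrightarrow> same_block a x y"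
  unfolding same_block_def by force

lemma S_a_iff:
  "\<pi> \<in> S_a a \<longleftrightarrow>
     \<pi> permutes {1..sum_list a} \<and> (\<forall>x y. x < y \<longrightarrow> same_block a x y \<longrightarrow> \<pi> y < \<pi> x)"
proof -
  have dec: "\<pi> y < \<pi> x"
    if step: "\<forall>i. same_block a i (i + 1) \<longrightarrow> \<pi> (i + 1) < \<pi> i" and "x < y" "same_block a x y" for x y
  proof -
    obtain m where m: "m \<in> {1..length a}" "x \<in> blk a m" "y \<in> blk a m"
      using \<open>same_block a x y\<close> unfolding same_block_def by blast
    have chain: "\<pi> (x + Suc d) < \<pi> x" if "x + Suc d \<in> blk a m" for d
      using that
    proof (induction d)
      case 0
      then have "same_block a x (x + 1)" using m unfolding same_block_def by auto
      then show ?case using step by simp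
    next
      case (Suc d)
      have "x + Suc d \<in> blk a m" using Suc.prems m(2) by (auto simp: blk_def)
      then have "\<pi> (x + Suc d) < \<pi> x" using Suc.IH by blast
      moreover have "same_block a (x + Suc d) (x + Suc d + 1)"
        using Suc.prems m(1) \<open>x + Suc d \<in> blk a m\<close> unfolding same_block_def by auto
      then have "\<pi> (x + Suc d + 1) < \<pi> (x + Suc d)" using step by blast
      ultimately show ?case by simp
    qed
    define d where "d = y - x - 1"
    have d: "y = x + Suc d" using \<open>x < y\<close> by (simp add: d_def)
    show ?thesis using chain[of d] m(3) unfolding d by simp
  qed
  show ?thesis
  proof
    assume "\<pi> \<in> S_a a"
    then show "\<pi> permutes {1..sum_list a} \<and> (\<forall>x y. x < y \<longrightarrow> same_block a x y \<longrightarrow> \<pi> y < \<pi> x)"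
      using dec unfolding S_a_def by blast
  qed (simp add: S_a_def)
qed

lemma S_a_permutes: "\<pi> \<in> S_a a \<Longrightarrow> \<pi> permutes {1..sum_list a}"
  by (simp add: S_a_def)

lemma S_a_decreasing: "\<pi> \<in> S_a a \<Longrightarrow> x < y \<Longrightarrow> same_block a x y \<Longrightarrow> \<pi> y < \<pi> x"
  by (simp add: S_a_iff)

lemma finite_S_a: "finite (S_a a)"
  unfolding S_a_def by (rule finite_subset[OF _ finite_permutations[of "{1..sum_list a}"]]) auto

lemma finite_D_a: "finite (D_a j a)"
  unfolding D_a_def using finite_S_a by simp

lemma S_a_fixed_point_unique:
  assumes \<pi>: "\<pi> \<in> S_a a" and "same_block a p q" and "\<pi> p = p" "\<pi> q = q"
  shows "p = q"
proof -
  have "same_block a q p" using assms(2) unfolding same_block_def by blast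
  show ?thesis
  proof (rule ccontr)
    assume "p \<noteq> q"
    then consider "p < q" | "q < p" by linarith
    then show False using S_a_decreasing[OF \<pi>] assms(2-4) \<open>same_block a q p\<close> by cases force+
  qed
qed

subsection \<open>Deleting and inserting a point of a permutation\<close>

definition shift_up :: "nat \<Rightarrow> nat \<Rightarrow> nat" where
  "shift_up p x = (if x < p then x else Suc x)"

definition shift_down :: "nat \<Rightarrow> nat \<Rightarrow> nat" where
  "shift_down p y = (if y < p then y else y - 1)"

lemma shift_up_down: "x \<noteq> p \<Longrightarrow> shift_up p (shift_down p x) = x"
  by (auto simp: shift_up_def shift_down_def)

lemma shift_down_up: "shift_down p (shift_up p x) = x"
  by (auto simp: shift_up_def shift_down_def)

lemma shift_up_neq: "shift_up p x \<noteq> p"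
  by (auto simp: shift_up_def)

lemma shift_up_range: "x \<in> {1..n - 1} \<Longrightarrow> p \<in> {1..n} \<Longrightarrow> shift_up p x \<in> {1..n}"
  by (auto simp: shift_up_def)

lemma shift_down_range: "x \<in> {1..n} \<Longrightarrow> x \<noteq> p \<Longrightarrow> p \<in> {1..n} \<Longrightarrow> shift_down p x \<in> {1..n - 1}"
  by (auto simp: shift_down_def)

lemma shift_up_less: "x < y \<Longrightarrow> shift_up p x < shift_up p y"
  by (auto simp: shift_up_def)

lemma shift_down_less: "x < y \<Longrightarrow> x \<noteq> p \<Longrightarrow> y \<noteq> p \<Longrightarrow> shift_down p x < shift_down p y"
  by (auto simp: shift_down_def)

lemma shift_up_eq_iff: "t \<noteq> p \<Longrightarrow> shift_up p w = t \<longleftrightarrow> w = shift_down p t"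
  by (auto simp: shift_up_def shift_down_def)

lemma shift_down_inj: "x \<noteq> p \<Longrightarrow> y \<noteq> p \<Longrightarrow> shift_down p x = shift_down p y \<Longrightarrow> x = y"
  by (auto simp: shift_down_def split: if_splits)

lemma shift_up_inj: "shift_up p x = shift_up p y \<Longrightarrow> x = y"
  by (auto simp: shift_up_def split: if_splits)

definition delete_point :: "nat \<Rightarrow> nat \<Rightarrow> nat \<Rightarrow> (nat \<Rightarrow> nat) \<Rightarrow> nat \<Rightarrow> nat" where
  "delete_point n p v \<pi> = (\<lambda>i. if i \<in> {1..n - 1} then shift_down v (\<pi> (shift_up p i)) else i)"

definition insert_point :: "nat \<Rightarrow> nat \<Rightarrow> nat \<Rightarrow> (nat \<Rightarrow> nat) \<Rightarrow> nat \<Rightarrow> nat" where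
  "insert_point n p v \<sigma> =
     (\<lambda>i. if i \<in> {1..n} then (if i = p then v else shift_up v (\<sigma> (shift_down p i))) else i)"

lemma delete_point_apply: "x \<in> {1..n - 1} \<Longrightarrow> delete_point n p v \<pi> x = shift_down v (\<pi> (shift_up p x))"
  by (simp add: delete_point_def)

lemma insert_point_apply:
  "x \<in> {1..n} \<Longrightarrow> x \<noteq> p \<Longrightarrow> insert_point n p v \<sigma> x = shift_up v (\<sigma> (shift_down p x))"
  by (simp add: insert_point_def)

lemma insert_point_at: "p \<in> {1..n} \<Longrightarrow> insert_point n p v \<sigma> p = v"
  by (simp add: insert_point_def)

lemma permutes_if_inj_on_endo:
  assumes "finite S" "\<And>x. x \<in> S \<Longrightarrow> f x \<in> S" "inj_on f S" "\<And>x. x \<notin> S \<Longrightarrow> f x = x"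
  shows "f permutes S"
proof (rule bij_imp_permutes)
  have "f ` S = S" using endo_inj_surj[OF assms(1) _ assms(3)] assms(2) by blast
  then show "bij_betw f S S" using assms(3) by (simp add: bij_betw_def)
qed (use assms in auto)

lemma permutes_value_neq:
  "\<pi> permutes S \<Longrightarrow> \<pi> p = v \<Longrightarrow> x \<noteq> p \<Longrightarrow> \<pi> x \<noteq> v"
  by (metis permutes_inj injD)

lemma delete_point_permutes:
  assumes \<pi>: "\<pi> permutes {1..n}" and p: "p \<in> {1..n}" and v: "\<pi> p = v"
  shows "delete_point n p v \<pi> permutes {1..n - 1}"
proof (rule permutes_if_inj_on_endo)
  have vn: "v \<in> {1..n}" by (metis p v permutes_in_image[OF \<pi>])
  have ne: "\<pi> (shift_up p x) \<noteq> v" for x using permutes_value_neq[OF \<pi> v shift_up_neq] .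
  show "delete_point n p v \<pi> x \<in> {1..n - 1}" if "x \<in> {1..n - 1}" for x
    using that shift_down_range[OF _ ne vn] permutes_in_image[OF \<pi>] shift_up_range[OF that p]
    by (simp add: delete_point_def)
  show "inj_on (delete_point n p v \<pi>) {1..n - 1}"
  proof (rule inj_onI)
    fix x y assume "x \<in> {1..n - 1}" "y \<in> {1..n - 1}" "delete_point n p v \<pi> x = delete_point n p v \<pi> y"
    then have "shift_down v (\<pi> (shift_up p x)) = shift_down v (\<pi> (shift_up p y))"
      by (simp add: delete_point_def)
    then show "x = y" using shift_down_inj[OF ne ne] permutes_inj[OF \<pi>] shift_up_inj by (metis injD)
  qed
qed (auto simp: delete_point_def)

lemma insert_point_permutes:
  assumes \<sigma>: "\<sigma> permutes {1..n - 1}" and p: "p \<in> {1..n}" and v: "v \<in> {1..n}"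
  shows "insert_point n p v \<sigma> permutes {1..n}"
proof (rule permutes_if_inj_on_endo)
  show "insert_point n p v \<sigma> x \<in> {1..n}" if "x \<in> {1..n}" for x
  proof (cases "x = p")
    case False
    then show ?thesis
      using that shift_up_range[OF permutes_in_image[OF \<sigma>, THEN iffD2] v] shift_down_range[OF that False p]
      by (simp add: insert_point_def)
  qed (use v that in \<open>simp add: insert_point_def\<close>)
  show "inj_on (insert_point n p v \<sigma>) {1..n}"
  proof (rule inj_onI)
    fix x y assume x: "x \<in> {1..n}" and y: "y \<in> {1..n}"
      and eq: "insert_point n p v \<sigma> x = insert_point n p v \<sigma> y"
    show "x = y"
    proof (cases "x = p"; cases "y = p")
      assume "x \<noteq> p" "y \<noteq> p"
      then have "shift_up v (\<sigma> (shift_down p x)) = shift_up v (\<sigma> (shift_down p y))"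
        using eq x y by (simp add: insert_point_def)
      then show "x = y" using \<open>x \<noteq> p\<close> \<open>y \<noteq> p\<close> shift_down_inj shift_up_inj permutes_inj[OF \<sigma>]
        by (metis injD)
    qed (use eq x y shift_up_neq shift_up_neq[symmetric] in \<open>auto simp: insert_point_def\<close>)
  qed
qed (auto simp: insert_point_def)

lemma delete_insert_point:
  assumes \<sigma>: "\<sigma> permutes {1..n - 1}" and p: "p \<in> {1..n}"
  shows "delete_point n p v (insert_point n p v \<sigma>) = \<sigma>"
proof
  fix x show "delete_point n p v (insert_point n p v \<sigma>) x = \<sigma> x"
  proof (cases "x \<in> {1..n - 1}")
    case True
    then show ?thesis using shift_up_range[OF True p] shift_up_neq[of p x]
      by (simp add: delete_point_apply insert_point_apply shift_down_up)
  qed (auto simp: delete_point_def insert_point_def permutes_not_in[OF \<sigma>])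
qed

lemma insert_delete_point:
  assumes \<pi>: "\<pi> permutes {1..n}" and p: "p \<in> {1..n}" and v: "\<pi> p = v"
  shows "insert_point n p v (delete_point n p v \<pi>) = \<pi>"
proof
  fix x show "insert_point n p v (delete_point n p v \<pi>) x = \<pi> x"
  proof (cases "x \<in> {1..n}")
    case True
    show ?thesis
    proof (cases "x = p")
      case False
      then show ?thesis using True shift_down_range[OF True False p] permutes_value_neq[OF \<pi> v False]
        by (simp add: delete_point_apply insert_point_apply shift_up_down)
    qed (use insert_point_at[OF p] v in simp)
  qed (auto simp: insert_point_def delete_point_def permutes_not_in[OF \<pi>])
qed

lemma delete_point_fixed_iff:
  assumes \<pi>: "\<pi> permutes {1..n}" and "\<pi> p = p" and t: "t \<in> {1..n - 1}"
  shows "delete_point n p p \<pi> t = t \<longleftrightarrow> \<pi> (shift_up p t) = shift_up p t"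
  using permutes_value_neq[OF \<pi> \<open>\<pi> p = p\<close> shift_up_neq, of t] shift_up_eq_iff shift_up_down shift_down_up
  by (metis delete_point_apply[OF t])

lemma insert_point_fixed_iff:
  assumes "t \<in> {1..n}" "t \<noteq> p"
  shows "insert_point n p p \<sigma> t = t \<longleftrightarrow> \<sigma> (shift_down p t) = shift_down p t"
  using insert_point_apply[OF assms] shift_up_eq_iff[OF assms(2)] by simp

abbreviation dec_part :: "nat list \<Rightarrow> nat \<Rightarrow> nat list" where
  "dec_part a i \<equiv> a[i := a ! i - 1]"

lemma block_end_dec_part:
  assumes i: "i < length a" "1 \<le> a ! i"
  shows "block_end (dec_part a i) j = (if j \<le> i then block_end a j else block_end a j - 1)"
proof (cases "j \<le> i")
  case False
  have "take j (dec_part a i) = (take j a)[i := a ! i - 1]" by (rule take_update_swap)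
  then have "block_end (dec_part a i) j = block_end a j + (a ! i - 1) - (take j a) ! i"
    using sum_list_update[of i "take j a"] False i by simp
  then show ?thesis using False i by simp
qed simp

lemma sum_list_dec_part:
  "i < length a \<Longrightarrow> 1 \<le> a ! i \<Longrightarrow> sum_list (dec_part a i) = sum_list a - 1"
  using block_end_dec_part[of i a "length a"] by simp

lemma blk_dec_part_Suc:
  "i < length a \<Longrightarrow> 1 \<le> a ! i \<Longrightarrow> blk (dec_part a i) (Suc i) = {block_end a i + 1 ..< block_end a i + a ! i}"
  using block_end_dec_part[of i a i] block_end_dec_part[of i a "Suc i"] block_end_Suc[where a=a and j=i]
  by (auto simp: blk_Suc)

lemma blk_dec_part_iff:
  assumes i: "i < length a" "1 \<le> a ! i" and p: "p \<in> blk a (Suc i)"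
  shows "x \<in> blk (dec_part a i) m \<longleftrightarrow> shift_up p x \<in> blk a m"
proof (cases m)
  case (Suc m')
  have pb: "block_end a i < p" "p \<le> block_end a i + a ! i" using p blk_Suc_eq[OF i(1)] by auto
  have "block_end a m' \<le> block_end a (Suc m')" by (intro block_end_mono) simp
  moreover have "m' < i \<Longrightarrow> block_end a (Suc m') \<le> block_end a i"
    "i < m' \<Longrightarrow> block_end a (Suc i) \<le> block_end a m'" by (simp_all add: block_end_mono)
  ultimately show ?thesis using pb Suc i block_end_Suc[where a=a and j=i]
    by (cases m' i rule: linorder_cases) (auto simp: blk_Suc block_end_dec_part[OF i, simplified] shift_up_def)
qed (simp add: blk_def)

lemma shift_down_blk_dec_part_iff:
  assumes "i < length a" "1 \<le> a ! i" "p \<in> blk a (Suc i)" "x \<noteq> p"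
  shows "shift_down p x \<in> blk (dec_part a i) m \<longleftrightarrow> x \<in> blk a m"
  using blk_dec_part_iff[OF assms(1-3)] shift_up_down[OF assms(4)] by simp

lemma same_block_dec_part_iff:
  assumes "i < length a" "1 \<le> a ! i" "p \<in> blk a (Suc i)"
  shows "same_block (dec_part a i) x y \<longleftrightarrow> same_block a (shift_up p x) (shift_up p y)"
  unfolding same_block_def using blk_dec_part_iff[OF assms] by simp

lemma same_block_dec_part_shift_down_iff:
  assumes "i < length a" "1 \<le> a ! i" "p \<in> blk a (Suc i)" "x \<noteq> p" "y \<noteq> p"
  shows "same_block (dec_part a i) (shift_down p x) (shift_down p y) \<longleftrightarrow> same_block a x y"
  using same_block_dec_part_iff[OF assms(1-3)] shift_up_down assms(4,5) by simp

lemma delete_point_in_S_a: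
  assumes i: "i < length a" "1 \<le> a ! i" and p: "p \<in> blk a (Suc i)"
    and \<pi>: "\<pi> \<in> S_a a" and v: "\<pi> p = v"
  shows "delete_point (sum_list a) p v \<pi> \<in> S_a (dec_part a i)"
proof -
  let ?n = "sum_list a" and ?\<sigma> = "delete_point (sum_list a) p v \<pi>"
  have \<pi>p: "\<pi> permutes {1..?n}" using S_a_permutes[OF \<pi>] .
  have sum: "sum_list (dec_part a i) = ?n - 1" using sum_list_dec_part[OF i] .
  have ne: "\<pi> (shift_up p x) \<noteq> v" for x using permutes_value_neq[OF \<pi>p v shift_up_neq] .
  have "?\<sigma> y < ?\<sigma> x" if "x < y" "same_block (dec_part a i) x y" for x y
  proof -
    have "x \<in> {1..?n - 1}" "y \<in> {1..?n - 1}"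
      using that(2) blk_subset sum unfolding same_block_def by (metis subsetD)+
    moreover have "\<pi> (shift_up p y) < \<pi> (shift_up p x)"
      using S_a_decreasing[OF \<pi> shift_up_less[OF that(1)]] that(2) same_block_dec_part_iff[OF i p] by simp
    ultimately show ?thesis using shift_down_less[OF _ ne ne] by (simp add: delete_point_apply)
  qed
  then show ?thesis
    using delete_point_permutes[OF \<pi>p subsetD[OF blk_subset p] v] sum by (simp add: S_a_iff)
qed

lemma insert_point_less:
  assumes i: "i < length a" "1 \<le> a ! i" and p: "p \<in> blk a (Suc i)" and \<sigma>: "\<sigma> \<in> S_a (dec_part a i)"
    and xy: "x < y" "same_block a x y" "x \<noteq> p" "y \<noteq> p"
  shows "insert_point (sum_list a) p v \<sigma> y < insert_point (sum_list a) p v \<sigma> x"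
proof -
  have "x \<in> {1..sum_list a}" "y \<in> {1..sum_list a}"
    using xy(2) blk_subset unfolding same_block_def by blast+
  moreover have "\<sigma> (shift_down p y) < \<sigma> (shift_down p x)"
    using S_a_decreasing[OF \<sigma> shift_down_less[OF xy(1,3,4)]]
      same_block_dec_part_shift_down_iff[OF i p xy(3,4)] xy(2) by simp
  ultimately show ?thesis using xy(3,4) shift_up_less by (simp add: insert_point_apply)
qed

subsection \<open>The recurrence for \<open>S_a\<close>\<close>

lemma card_S_a_sum_list_0: "sum_list a = 0 \<Longrightarrow> card (S_a a) = 1"
proof -
  assume a0: "sum_list a = 0"
  have "\<not> same_block a x y" for x y
    using blk_subset[of a] a0 unfolding same_block_def by auto
  then have "S_a a = {id}" using a0 by (auto simp: S_a_def)
  then show ?thesis by simp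
qed

lemma S_a_max_at_block_start:
  assumes \<pi>: "\<pi> \<in> S_a a" and n: "sum_list a \<noteq> 0"
  shows "\<exists>i<length a. 1 \<le> a ! i \<and> \<pi> (block_end a i + 1) = sum_list a"
proof -
  let ?n = "sum_list a"
  have \<pi>p: "\<pi> permutes {1..?n}" using S_a_permutes[OF \<pi>] .
  have "?n \<in> {1..?n}" using n by (intro atLeastAtMost_iff[THEN iffD2] conjI) linarith+
  then obtain p where p: "p \<in> {1..?n}" "\<pi> p = ?n" using permutes_image[OF \<pi>p] by (metis imageE)
  obtain i where i: "i < length a" "p \<in> blk a (Suc i)" using ex_blk[OF p(1)] by blast
  have "p = block_end a i + 1"
  proof (rule ccontr)
    assume "p \<noteq> block_end a i + 1"
    then have q: "p - 1 \<in> blk a (Suc i)" using i by (auto simp: blk_Suc)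
    then have "?n < \<pi> (p - 1)"
      using S_a_decreasing[OF \<pi>, of "p - 1" p] same_block_SucI[OF i(1) q i(2)] p by force
    moreover have "\<pi> (p - 1) \<in> {1..?n}" using permutes_in_image[OF \<pi>p] subsetD[OF blk_subset q] by simp
    ultimately show False by simp
  qed
  moreover have "1 \<le> a ! i" using i blk_Suc_eq by fastforce
  ultimately show ?thesis using i p by blast
qed

lemma insert_max_in_S_a:
  assumes i: "i < length a" "1 \<le> a ! i" and \<sigma>: "\<sigma> \<in> S_a (dec_part a i)"
  shows "insert_point (sum_list a) (block_end a i + 1) (sum_list a) \<sigma> \<in> S_a a"
proof -
  let ?n = "sum_list a" and ?p = "block_end a i + 1"
  let ?\<pi> = "insert_point ?n ?p ?n \<sigma>"
  have pb: "?p \<in> blk a (Suc i)" using i blk_Suc_eq by simp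
  have pn: "?p \<in> {1..?n}" using subsetD[OF blk_subset pb] .
  have \<sigma>p: "\<sigma> permutes {1..?n - 1}" using S_a_permutes[OF \<sigma>] sum_list_dec_part[OF i] by simp
  have "?\<pi> y < ?\<pi> x" if xy: "x < y" "same_block a x y" for x y
  proof -
    obtain m where m: "x \<in> blk a m" "y \<in> blk a m" using xy unfolding same_block_def by blast
    have yr: "y \<in> {1..?n}" using subsetD[OF blk_subset m(2)] .
    have yp: "y \<noteq> ?p"
    proof
      assume "y = ?p"
      then have "m = Suc i" using blk_unique[OF m(2), of "Suc i"] pb by simp
      then have "x \<in> blk a (Suc i)" using m(1) by simp
      then show False using xy(1) \<open>y = ?p\<close> by (simp add: blk_Suc)
    qed
    show ?thesis
    proof (cases "x = ?p")
      case True
      have "\<sigma> (shift_down ?p y) \<in> {1..?n - 1}"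
        using permutes_in_image[OF \<sigma>p] shift_down_range[OF yr yp pn] by blast
      then have "\<sigma> (shift_down ?p y) < ?n" using pn by auto
      then show ?thesis using True insert_point_apply[OF yr yp] insert_point_at[OF pn] by (simp add: shift_up_def)
    next
      case False
      then show ?thesis using insert_point_less[OF i pb \<sigma> xy False yp] by simp
    qed
  qed
  moreover have "?n \<in> {1..?n}" using pn by auto
  ultimately show ?thesis unfolding S_a_iff using insert_point_permutes[OF \<sigma>p pn] by blast
qed

lemma card_S_a_max_at:
  assumes i: "i < length a" "1 \<le> a ! i"
  shows "card {\<pi> \<in> S_a a. \<pi> (block_end a i + 1) = sum_list a} = card (S_a (dec_part a i))"
proof -
  let ?n = "sum_list a" and ?p = "block_end a i + 1"
  have pb: "?p \<in> blk a (Suc i)" using i blk_Suc_eq by simp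
  have pn: "?p \<in> {1..?n}" using subsetD[OF blk_subset pb] .
  show ?thesis
  proof (rule bij_betw_same_card[OF bij_betw_byWitness[where f = "delete_point ?n ?p ?n"
          and f' = "insert_point ?n ?p ?n"]])
    show "\<forall>\<pi>\<in>{\<pi> \<in> S_a a. \<pi> ?p = ?n}. insert_point ?n ?p ?n (delete_point ?n ?p ?n \<pi>) = \<pi>"
      using insert_delete_point pn by (auto simp: S_a_def)
    show "\<forall>\<sigma>\<in>S_a (dec_part a i). delete_point ?n ?p ?n (insert_point ?n ?p ?n \<sigma>) = \<sigma>"
      using delete_insert_point pn sum_list_dec_part[OF i] by (auto simp: S_a_def)
    show "delete_point ?n ?p ?n ` {\<pi> \<in> S_a a. \<pi> ?p = ?n} \<subseteq> S_a (dec_part a i)"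
      using delete_point_in_S_a[OF i pb] by blast
    show "insert_point ?n ?p ?n ` S_a (dec_part a i) \<subseteq> {\<pi> \<in> S_a a. \<pi> ?p = ?n}"
      using insert_max_in_S_a[OF i] insert_point_at[OF pn] by blast
  qed
qed

lemma card_S_a_recurrence:
  assumes "sum_list a \<noteq> 0"
  shows "card (S_a a) = (\<Sum>i | i < length a \<and> 1 \<le> a ! i. card (S_a (dec_part a i)))"
proof -
  let ?I = "{i. i < length a \<and> 1 \<le> a ! i}"
  define P where "P i = {\<pi> \<in> S_a a. \<pi> (block_end a i + 1) = sum_list a}" for i
  have cover: "S_a a = (\<Union>i\<in>?I. P i)"
  proof (intro equalityI subsetI)
    fix \<pi> assume "\<pi> \<in> S_a a"
    with S_a_max_at_block_start[OF this assms] show "\<pi> \<in> (\<Union>i\<in>?I. P i)" unfolding P_def by blast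
  qed (auto simp: P_def)
  have "P i \<inter> P i' = {}" if "i \<in> ?I" "i' \<in> ?I" "i \<noteq> i'" for i i'
  proof -
    have start: "block_end a i + 1 \<in> blk a (Suc i)" "block_end a i' + 1 \<in> blk a (Suc i')"
      using that blk_Suc_eq by auto
    have distinct: "block_end a i + 1 \<noteq> block_end a i' + 1"
    proof
      assume "block_end a i + 1 = block_end a i' + 1"
      then have "Suc i = Suc i'" using blk_unique[OF start(1)] start(2) by simp
      then show False using that(3) by simp
    qed
    have "\<pi> (block_end a i + 1) \<noteq> \<pi> (block_end a i' + 1)" if "\<pi> \<in> S_a a" for \<pi>
      using distinct S_a_permutes[OF that] by (metis permutes_inj injD)
    then show ?thesis unfolding P_def by (metis (mono_tags, lifting) Int_emptyI mem_Collect_eq)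
  qed
  moreover have "finite ?I" by (rule finite_subset[of _ "{..<length a}"]) auto
  ultimately have "card (S_a a) = (\<Sum>i\<in>?I. card (P i))"
    unfolding cover by (intro card_UN_disjoint) (auto simp: P_def finite_S_a)
  then show ?thesis using card_S_a_max_at unfolding P_def by simp
qed

subsection \<open>The recurrence for \<open>D_a\<close>\<close>

text \<open>The permutations into which a fixed point \<open>p\<close> can be inserted in block \<open>m + 1\<close> without
  destroying the decrease along that block.\<close>

definition splits_at :: "nat list \<Rightarrow> nat \<Rightarrow> nat \<Rightarrow> (nat \<Rightarrow> nat) \<Rightarrow> bool" where
  "splits_at a m p \<sigma> \<longleftrightarrow> (\<forall>x \<in> blk a (Suc m). (x < p \<longrightarrow> p \<le> \<sigma> x) \<and> (p \<le> x \<longrightarrow> \<sigma> x < p))"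

lemma decreasing_split_point:
  fixes \<sigma> :: "nat \<Rightarrow> nat"
  assumes "l \<le> r"
    and "\<forall>x\<in>{l..<r}. \<forall>y\<in>{l..<r}. x < y \<longrightarrow> \<sigma> y < \<sigma> x"
    and "\<forall>x\<in>{l..<r}. \<sigma> x \<noteq> x"
  shows "\<exists>p\<in>{l..r}. \<forall>x\<in>{l..<r}. (x < p \<longrightarrow> p \<le> \<sigma> x) \<and> (p \<le> x \<longrightarrow> \<sigma> x < p)"
  using assms
proof (induction r rule: dec_induct)
  case (step r)
  obtain p where p: "p \<in> {l..r}" and split: "\<forall>x\<in>{l..<r}. (x < p \<longrightarrow> p \<le> \<sigma> x) \<and> (p \<le> x \<longrightarrow> \<sigma> x < p)"
    using step.IH step.prems by auto
  have dec: "x \<in> {l..<r} \<Longrightarrow> \<sigma> r < \<sigma> x" for x using step.prems(1) step.hyps by auto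
  show ?case
  proof (cases "p < r \<or> \<sigma> r < r")
    case True
    have "\<sigma> r < p"
    proof (cases "p < r")
      case True
      then have "r - 1 \<in> {l..<r}" using p by auto
      then show ?thesis using dec split True by fastforce
    qed (use True p in auto)
    then have "\<forall>x\<in>{l..<Suc r}. (x < p \<longrightarrow> p \<le> \<sigma> x) \<and> (p \<le> x \<longrightarrow> \<sigma> x < p)"
      using split p by (auto simp: less_Suc_eq)
    then show ?thesis using p by auto
  next
    case False
    with p have "p = r" by auto
    moreover have "\<sigma> r \<noteq> r" using step.prems(2) step.hyps by simp
    ultimately have "r < \<sigma> r" using False by linarith
    have "Suc r \<le> \<sigma> x" if "x \<in> {l..<Suc r}" for x
      using that dec[of x] \<open>r < \<sigma> r\<close> by (cases "x = r") auto
    then show ?thesis using step.hyps by (intro bexI[of _ "Suc r"]) auto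
  qed
qed simp

lemma ex_splits_at:
  assumes i: "m < length a" "1 \<le> a ! m" and \<sigma>: "\<sigma> \<in> D_a (Suc m) (dec_part a m)"
  shows "\<exists>p\<in>blk a (Suc m). splits_at (dec_part a m) m p \<sigma>"
proof -
  let ?l = "block_end a m + 1" and ?r = "block_end a m + a ! m"
  have B': "blk (dec_part a m) (Suc m) = {?l..<?r}" using blk_dec_part_Suc[OF i] .
  have \<sigma>S: "\<sigma> \<in> S_a (dec_part a m)" using \<sigma> unfolding D_a_def by blast
  have "\<forall>x\<in>{?l..<?r}. \<forall>y\<in>{?l..<?r}. x < y \<longrightarrow> \<sigma> y < \<sigma> x"
  proof (intro ballI impI)
    fix x y assume xy: "x \<in> {?l..<?r}" "y \<in> {?l..<?r}" "x < y"
    have "same_block (dec_part a m) x y" using same_block_SucI[of m "dec_part a m" x y] i xy B' by simp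
    then show "\<sigma> y < \<sigma> x" using S_a_decreasing[OF \<sigma>S xy(3)] by blast
  qed
  moreover have "\<forall>x\<in>{?l..<?r}. \<sigma> x \<noteq> x"
  proof
    fix x assume "x \<in> {?l..<?r}"
    then have "x \<in> (\<Union>m'\<in>{1..Suc m}. blk (dec_part a m) m')" using B' by (intro UN_I[of "Suc m"]) auto
    then show "\<sigma> x \<noteq> x" using \<sigma> unfolding D_a_def by blast
  qed
  ultimately obtain p where "p \<in> {?l..?r}" "\<forall>x\<in>{?l..<?r}. (x < p \<longrightarrow> p \<le> \<sigma> x) \<and> (p \<le> x \<longrightarrow> \<sigma> x < p)"
    using decreasing_split_point[of ?l ?r \<sigma>] i by auto
  then show ?thesis unfolding splits_at_def B' blk_Suc_eq[OF i(1)] by blast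
qed

lemma splits_at_unique:
  assumes i: "m < length a" "1 \<le> a ! m" and "p \<in> blk a (Suc m)" "q \<in> blk a (Suc m)"
    and "splits_at (dec_part a m) m p \<sigma>" "splits_at (dec_part a m) m q \<sigma>"
  shows "p = q"
proof -
  have less_False: False if "p \<in> blk a (Suc m)" "q \<in> blk a (Suc m)" "p < q"
    "splits_at (dec_part a m) m p \<sigma>" "splits_at (dec_part a m) m q \<sigma>" for p q
  proof -
    have "p \<in> blk (dec_part a m) (Suc m)"
      using that(1-3) blk_dec_part_Suc[OF i] blk_Suc_eq[OF i(1)] by simp
    then have "\<sigma> p < p" "q \<le> \<sigma> p" using that(3-5) unfolding splits_at_def by auto
    then show False using that(3) by simp
  qed
  show ?thesis
  proof (cases p q rule: linorder_cases)
    case less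
    then show ?thesis using less_False assms(3-6) by blast
  next
    case greater
    then show ?thesis using less_False assms(3-6) by blast
  qed
qed

lemma insert_fixed_point_in_S_a:
  assumes i: "m < length a" "1 \<le> a ! m" and pb: "p \<in> blk a (Suc m)"
    and \<sigma>: "\<sigma> \<in> S_a (dec_part a m)" and split: "splits_at (dec_part a m) m p \<sigma>"
  shows "insert_point (sum_list a) p p \<sigma> \<in> S_a a"
proof -
  let ?n = "sum_list a" and ?a' = "dec_part a m"
  let ?\<pi> = "insert_point ?n p p \<sigma>"
  have pn: "p \<in> {1..?n}" using subsetD[OF blk_subset pb] .
  have \<sigma>p: "\<sigma> permutes {1..?n - 1}" using S_a_permutes[OF \<sigma>] sum_list_dec_part[OF i] by simp
  have "?\<pi> y < ?\<pi> x" if xy: "x < y" "same_block a x y" for x y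
  proof -
    obtain m' where m': "x \<in> blk a m'" "y \<in> blk a m'" using xy unfolding same_block_def by blast
    then have xr: "x \<in> {1..?n}" and yr: "y \<in> {1..?n}" using blk_subset by blast+
    consider "x = p" | "y = p" | "x \<noteq> p" "y \<noteq> p" by blast
    then show ?thesis
    proof cases
      case 1
      then have yp: "y \<noteq> p" using xy by simp
      have "m' = Suc m" using blk_unique[OF _ pb] m'(1) 1 by simp
      then have "shift_down p y \<in> blk ?a' (Suc m)" using shift_down_blk_dec_part_iff[OF i pb yp] m'(2) by simp
      moreover have "p \<le> shift_down p y" using xy 1 by (auto simp: shift_down_def)
      ultimately have "\<sigma> (shift_down p y) < p" using split unfolding splits_at_def by blast
      then show ?thesis using 1 insert_point_apply[OF yr yp] insert_point_at[OF pn] by (simp add: shift_up_def)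
    next
      case 2
      then have xp: "x \<noteq> p" using xy by simp
      have "m' = Suc m" using blk_unique[OF _ pb] m'(2) 2 by simp
      then have "shift_down p x \<in> blk ?a' (Suc m)" using shift_down_blk_dec_part_iff[OF i pb xp] m'(1) by simp
      moreover have "shift_down p x < p" using xy 2 by (auto simp: shift_down_def)
      ultimately have "p \<le> \<sigma> (shift_down p x)" using split unfolding splits_at_def by blast
      then show ?thesis using 2 insert_point_apply[OF xr xp] insert_point_at[OF pn] by (simp add: shift_up_def)
    next
      case 3
      then show ?thesis using insert_point_less[OF i pb \<sigma> xy] by simp
    qed
  qed
  then show ?thesis using insert_point_permutes[OF \<sigma>p pn pn] by (auto simp: S_a_iff)
qed

lemma delete_fixed_point_in_D_a:
  assumes i: "m < length a" "1 \<le> a ! m" and pb: "p \<in> blk a (Suc m)"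
    and \<pi>: "\<pi> \<in> D_a m a" and fixed: "\<pi> p = p"
  shows "delete_point (sum_list a) p p \<pi> \<in> D_a (Suc m) (dec_part a m)"
    and "splits_at (dec_part a m) m p (delete_point (sum_list a) p p \<pi>)"
proof -
  let ?n = "sum_list a" and ?a' = "dec_part a m"
  let ?\<sigma> = "delete_point ?n p p \<pi>"
  have \<pi>S: "\<pi> \<in> S_a a" and \<pi>D: "\<And>t m'. m' \<in> {1..m} \<Longrightarrow> t \<in> blk a m' \<Longrightarrow> \<pi> t \<noteq> t"
    using \<pi> unfolding D_a_def by auto
  have \<pi>p: "\<pi> permutes {1..?n}" using S_a_permutes[OF \<pi>S] .
  have sum: "sum_list ?a' = ?n - 1" using sum_list_dec_part[OF i] .
  have "?\<sigma> t \<noteq> t" if "m' \<in> {1..Suc m}" "t \<in> blk ?a' m'" for t m'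
  proof -
    have tr: "t \<in> {1..?n - 1}" using subsetD[OF blk_subset that(2)] sum by simp
    have ub: "shift_up p t \<in> blk a m'" using blk_dec_part_iff[OF i pb] that(2) by simp
    have "\<pi> (shift_up p t) \<noteq> shift_up p t"
    proof (cases "m' = Suc m")
      case True
      then have "same_block a (shift_up p t) p" using same_block_SucI[OF i(1) _ pb] ub by simp
      then show ?thesis using S_a_fixed_point_unique[OF \<pi>S _ _ fixed] shift_up_neq by blast
    qed (use \<pi>D[OF _ ub] that(1) in simp)
    then show ?thesis using delete_point_fixed_iff[OF \<pi>p fixed tr] by simp
  qed
  then show "?\<sigma> \<in> D_a (Suc m) ?a'"
    using delete_point_in_S_a[OF i pb \<pi>S fixed] unfolding D_a_def by blast
  show "splits_at ?a' m p ?\<sigma>" unfolding splits_at_def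
  proof (intro ballI conjI impI)
    fix x assume xb: "x \<in> blk ?a' (Suc m)"
    have xr: "x \<in> {1..?n - 1}" using subsetD[OF blk_subset xb] sum by simp
    have "shift_up p x \<in> blk a (Suc m)" using blk_dec_part_iff[OF i pb] xb by simp
    then have sb: "same_block a (shift_up p x) p" "same_block a p (shift_up p x)"
      using same_block_SucI[OF i(1)] pb by blast+
    show "p \<le> ?\<sigma> x" if "x < p"
      using S_a_decreasing[OF \<pi>S, of x p] sb that fixed delete_point_apply[OF xr]
      by (simp add: shift_up_def shift_down_def)
    show "?\<sigma> x < p" if "p \<le> x"
      using S_a_decreasing[OF \<pi>S, of p "Suc x"] sb that fixed delete_point_apply[OF xr]
      by (simp add: shift_up_def shift_down_def)
  qed
qed

lemma insert_fixed_point_in_D_a: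
  assumes i: "m < length a" "1 \<le> a ! m" and pb: "p \<in> blk a (Suc m)"
    and \<sigma>: "\<sigma> \<in> D_a (Suc m) (dec_part a m)" and split: "splits_at (dec_part a m) m p \<sigma>"
  shows "insert_point (sum_list a) p p \<sigma> \<in> D_a m a"
proof -
  let ?n = "sum_list a" and ?a' = "dec_part a m"
  have \<sigma>S: "\<sigma> \<in> S_a ?a'" and \<sigma>D: "\<And>t m'. m' \<in> {1..Suc m} \<Longrightarrow> t \<in> blk ?a' m' \<Longrightarrow> \<sigma> t \<noteq> t"
    using \<sigma> unfolding D_a_def by auto
  have "insert_point ?n p p \<sigma> t \<noteq> t" if "m' \<in> {1..m}" "t \<in> blk a m'" for t m'
  proof -
    have tr: "t \<in> {1..?n}" using blk_subset that(2) by blast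
    have tp: "t \<noteq> p" using blk_unique[OF that(2)] pb that(1) by force
    have "shift_down p t \<in> blk ?a' m'" using shift_down_blk_dec_part_iff[OF i pb tp] that(2) by simp
    moreover have "m' \<in> {1..Suc m}" using that(1) by simp
    ultimately have "\<sigma> (shift_down p t) \<noteq> shift_down p t" using \<sigma>D by blast
    then show ?thesis using insert_point_fixed_iff[OF tr tp] by simp
  qed
  then show ?thesis using insert_fixed_point_in_S_a[OF i pb \<sigma>S split] unfolding D_a_def by blast
qed

lemma card_D_a_fixing:
  assumes i: "m < length a" "1 \<le> a ! m" and pb: "p \<in> blk a (Suc m)"
  shows "card {\<pi> \<in> D_a m a. \<pi> p = p} =
         card {\<sigma> \<in> D_a (Suc m) (dec_part a m). splits_at (dec_part a m) m p \<sigma>}"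
proof -
  let ?n = "sum_list a"
  have pn: "p \<in> {1..?n}" using subsetD[OF blk_subset pb] .
  show ?thesis
  proof (rule bij_betw_same_card[OF bij_betw_byWitness[where f = "delete_point ?n p p"
          and f' = "insert_point ?n p p"]])
    show "\<forall>\<pi>\<in>{\<pi> \<in> D_a m a. \<pi> p = p}. insert_point ?n p p (delete_point ?n p p \<pi>) = \<pi>"
      using insert_delete_point pn by (auto simp: D_a_def S_a_def)
    show "\<forall>\<sigma>\<in>{\<sigma> \<in> D_a (Suc m) (dec_part a m). splits_at (dec_part a m) m p \<sigma>}.
            delete_point ?n p p (insert_point ?n p p \<sigma>) = \<sigma>"
      using delete_insert_point pn sum_list_dec_part[OF i] by (auto simp: D_a_def S_a_def)
    show "delete_point ?n p p ` {\<pi> \<in> D_a m a. \<pi> p = p}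
            \<subseteq> {\<sigma> \<in> D_a (Suc m) (dec_part a m). splits_at (dec_part a m) m p \<sigma>}"
      using delete_fixed_point_in_D_a[OF i pb] by blast
    show "insert_point ?n p p ` {\<sigma> \<in> D_a (Suc m) (dec_part a m). splits_at (dec_part a m) m p \<sigma>}
            \<subseteq> {\<pi> \<in> D_a m a. \<pi> p = p}"
      using insert_fixed_point_in_D_a[OF i pb] insert_point_at[OF pn] by blast
  qed
qed

lemma D_a_subset_S_a: "D_a j a \<subseteq> S_a a"
  by (auto simp: D_a_def)

lemma card_D_a_fixed_in_block:
  assumes i: "m < length a" "1 \<le> a ! m"
  shows "card {\<pi> \<in> D_a m a. \<exists>p\<in>blk a (Suc m). \<pi> p = p} = card (D_a (Suc m) (dec_part a m))"
proof -
  let ?B = "blk a (Suc m)" and ?a' = "dec_part a m"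
  define E where "E p = {\<pi> \<in> D_a m a. \<pi> p = p}" for p
  define Q where "Q p = {\<sigma> \<in> D_a (Suc m) ?a'. splits_at ?a' m p \<sigma>}" for p
  have fin: "finite ?B" by (simp add: blk_def)
  have "card {\<pi> \<in> D_a m a. \<exists>p\<in>?B. \<pi> p = p} = card (\<Union>p\<in>?B. E p)"
    unfolding E_def by (rule arg_cong[where f = card]) blast
  also have "\<dots> = (\<Sum>p\<in>?B. card (E p))"
  proof (rule card_UN_disjoint[OF fin])
    show "\<forall>p\<in>?B. \<forall>q\<in>?B. p \<noteq> q \<longrightarrow> E p \<inter> E q = {}"
    proof (intro ballI impI)
      fix p q assume "p \<in> ?B" "q \<in> ?B" "p \<noteq> q"
      then have "same_block a p q" using same_block_SucI[OF i(1)] by blast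
      then show "E p \<inter> E q = {}"
        using S_a_fixed_point_unique D_a_subset_S_a \<open>p \<noteq> q\<close> unfolding E_def by blast
    qed
  qed (simp add: E_def finite_D_a)
  also have "\<dots> = (\<Sum>p\<in>?B. card (Q p))"
    unfolding E_def Q_def using card_D_a_fixing[OF i] by simp
  also have "\<dots> = card (\<Union>p\<in>?B. Q p)"
  proof (rule card_UN_disjoint[OF fin, symmetric])
    show "\<forall>p\<in>?B. \<forall>q\<in>?B. p \<noteq> q \<longrightarrow> Q p \<inter> Q q = {}"
      using splits_at_unique[OF i] unfolding Q_def by blast
  qed (simp add: Q_def finite_D_a)
  also have "(\<Union>p\<in>?B. Q p) = D_a (Suc m) ?a'"
    unfolding Q_def using ex_splits_at[OF i] by auto
  finally show ?thesis .
qed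

lemma card_D_a_recurrence:
  assumes m: "m < length a"
  shows "card (D_a m a) =
         card (D_a (Suc m) a) + (if 1 \<le> a ! m then card (D_a (Suc m) (dec_part a m)) else 0)"
proof -
  let ?B = "blk a (Suc m)" and ?F = "{\<pi> \<in> D_a m a. \<exists>p\<in>blk a (Suc m). \<pi> p = p}"
  have "{1..Suc m} = insert (Suc m) {1..m}" by auto
  then have DS: "D_a (Suc m) a = {\<pi> \<in> D_a m a. \<forall>x\<in>?B. \<pi> x \<noteq> x}"
    unfolding D_a_def by auto
  then have split: "D_a m a = D_a (Suc m) a \<union> ?F" and "D_a (Suc m) a \<inter> ?F = {}" by auto
  then have "card (D_a (Suc m) a \<union> ?F) = card (D_a (Suc m) a) + card ?F"
    by (intro card_Un_disjoint) (simp_all add: finite_D_a)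
  then have card_split: "card (D_a m a) = card (D_a (Suc m) a) + card ?F"
    by (simp only: split[symmetric])
  show ?thesis
  proof (cases "1 \<le> a ! m")
    case True
    then show ?thesis using card_split card_D_a_fixed_in_block[OF m True] by simp
  next
    case False
    then have "?F = {}" using blk_Suc_eq[OF m] by simp
    then have "card ?F = 0" by (simp only: card.empty)
    then show ?thesis using card_split False by simp
  qed
qed

text \<open>Coefficientwise form of \<open>(1 + x_(i+1)) h\<close>; like every product it vanishes on exponent vectors of
  infinite support.\<close>

definition one_plus_var_times :: "nat \<Rightarrow> mser \<Rightarrow> mser" where
  "one_plus_var_times i h =
     (\<lambda>e. if finite {i. e i \<noteq> 0} then h e + (if 1 \<le> e i then h (e(i := e i - 1)) else 0) else 0)"

lemma finite_below:
  assumes "finite {i. e i \<noteq> 0}"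
  shows "finite {d::nat\<Rightarrow>nat. \<forall>i. d i \<le> e i}"
proof -
  let ?S = "{i. e i \<noteq> 0}"
  have "inj_on (\<lambda>d. restrict d ?S) {d. \<forall>i. d i \<le> e i}"
  proof (rule inj_onI)
    fix x y assume x: "x \<in> {d. \<forall>i. d i \<le> e i}" and y: "y \<in> {d. \<forall>i. d i \<le> e i}"
      and eq: "restrict x ?S = restrict y ?S"
    show "x = y"
    proof
      fix i show "x i = y i"
      proof (cases "i \<in> ?S")
        case True then show ?thesis using fun_cong[OF eq, of i] by simp
      next
        case False
        have "x i \<le> e i" "y i \<le> e i" using x y by auto
        then show ?thesis using False by simp
      qed
    qed
  qed
  moreover have "(\<lambda>d. restrict d ?S) ` {d. \<forall>i. d i \<le> e i} \<subseteq> PiE ?S (\<lambda>i. {0..e i})"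
  proof (rule image_subsetI)
    fix d assume "d \<in> {d. \<forall>i. d i \<le> e i}"
    then show "restrict d ?S \<in> PiE ?S (\<lambda>i. {0..e i})"
      by (subst restrict_PiE_iff) auto
  qed
  moreover have "finite (PiE ?S (\<lambda>i. {0..e i}))"
    using assms by (intro finite_PiE) auto
  ultimately show ?thesis using inj_on_finite by blast
qed

lemma infinite_below:
  assumes "infinite {i. e i \<noteq> 0}"
  shows "infinite {d::nat\<Rightarrow>nat. \<forall>i. d i \<le> e i}"
proof
  assume f: "finite {d::nat\<Rightarrow>nat. \<forall>i. d i \<le> e i}"
  have "(\<lambda>i. (\<lambda>_. 0::nat)(i := 1)) ` {i. e i \<noteq> 0} \<subseteq> {d::nat\<Rightarrow>nat. \<forall>i. d i \<le> e i}"
    by auto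
  moreover have "inj (\<lambda>i. (\<lambda>_. 0::nat)(i := 1))"
  proof (rule injI)
    fix x y assume "(\<lambda>_. 0::nat)(x := 1) = (\<lambda>_. 0::nat)(y := 1)"
    from fun_cong[OF this, of x] show "x = y" by (auto split: if_splits)
  qed
  ultimately have "finite ((\<lambda>i. (\<lambda>_. 0::nat)(i := 1)) ` {i. e i \<noteq> 0})"
    using f finite_subset by blast
  then have "finite {i. e i \<noteq> 0}"
    using finite_imageD inj_on_subset[OF \<open>inj _\<close> subset_UNIV] by blast
  then show False using assms by simp
qed

lemma ms_mult_infinite_support: "infinite {i. e i \<noteq> 0} \<Longrightarrow> ms_mult f g e = 0"
  unfolding ms_mult_def using infinite_below[of e] by simp

lemma finite_support_diff: "finite {i. e i \<noteq> 0} \<Longrightarrow> finite {i. (e i - d i :: nat) \<noteq> 0}"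
  by (rule finite_subset[of _ "{i. e i \<noteq> 0}"]) auto

lemma ms_mult_one_plus_var: "ms_mult (one_plus_var i) h = one_plus_var_times i h"
proof
  fix e
  show "ms_mult (one_plus_var i) h e = one_plus_var_times i h e"
  proof (cases "finite {i. e i \<noteq> 0}")
    case True
    let ?D = "{d :: nat \<Rightarrow> nat. \<forall>i. d i \<le> e i}"
    let ?z = "\<lambda>_. 0 :: nat" and ?u = "(\<lambda>_. 0 :: nat)(i := 1)"
    have "?u \<noteq> ?z" by (metis fun_upd_same zero_neq_one)
    moreover have "(\<lambda>j. e j - ?u j) = e(i := e i - 1)" by auto
    ultimately have "ms_mult (one_plus_var i) h e =
               (\<Sum>d\<in>?D. (if d = ?z then h e else 0) + (if d = ?u then h (e(i := e i - 1)) else 0))"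
      unfolding ms_mult_def one_plus_var_def ms_one_def ms_var_def
      by (intro sum.cong refl) (simp only: if_distrib[of "\<lambda>x. x * _"] distrib_right, simp)
    also have "\<dots> = h e + (if 1 \<le> e i then h (e(i := e i - 1)) else 0)"
      by (simp add: sum.distrib finite_below[OF True])
    finally show ?thesis using True by (simp add: one_plus_var_times_def)
  qed (simp add: ms_mult_infinite_support one_plus_var_times_def)
qed

lemma ms_mult_one_plus_var_times_right:
  "ms_mult f (one_plus_var_times i h) = one_plus_var_times i (ms_mult f h)"
proof
  fix e
  show "ms_mult f (one_plus_var_times i h) e = one_plus_var_times i (ms_mult f h) e"
  proof (cases "finite {i. e i \<noteq> 0}")
    case True
    let ?D = "{d :: nat \<Rightarrow> nat. \<forall>i. d i \<le> e i}"
    let ?e' = "e(i := e i - 1)"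
    let ?D' = "{d :: nat \<Rightarrow> nat. \<forall>j. d j \<le> ?e' j}"
    have fin: "finite ?D" using finite_below[OF True] .
    have diff: "(\<lambda>j. e j - d j)(i := e i - d i - 1) = (\<lambda>j. ?e' j - d j)" for d :: "nat \<Rightarrow> nat"
      by (rule ext) simp
    have "ms_mult f (one_plus_var_times i h) e =
          (\<Sum>d\<in>?D. f d * h (\<lambda>j. e j - d j) + (if 1 \<le> e i - d i then f d * h (\<lambda>j. ?e' j - d j) else 0))"
      unfolding ms_mult_def one_plus_var_times_def
      using finite_support_diff[OF True] diff by (intro sum.cong refl) (simp add: algebra_simps)
    also have "\<dots> = ms_mult f h e + (\<Sum>d\<in>{d\<in>?D. 1 \<le> e i - d i}. f d * h (\<lambda>j. ?e' j - d j))"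
      unfolding ms_mult_def by (simp only: sum.distrib sum.inter_filter[OF fin])
    also have "(\<Sum>d\<in>{d\<in>?D. 1 \<le> e i - d i}. f d * h (\<lambda>j. ?e' j - d j)) =
               (if 1 \<le> e i then ms_mult f h ?e' else 0)"
    proof (cases "1 \<le> e i")
      case True
      have "{d\<in>?D. 1 \<le> e i - d i} = ?D'"
      proof (intro set_eqI iffI)
        fix d assume "d \<in> {d\<in>?D. 1 \<le> e i - d i}"
        then show "d \<in> ?D'" by auto
      next
        fix d assume d: "d \<in> ?D'"
        have "d j \<le> e j" for j using d by (cases "j = i") (auto dest: spec[of _ j])
        moreover have "1 \<le> e i - d i" using d True by (auto dest: spec[of _ i])
        ultimately show "d \<in> {d\<in>?D. 1 \<le> e i - d i}" by blast
      qed
      then show ?thesis using True unfolding ms_mult_def by simp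
    qed simp
    finally show ?thesis using True by (simp add: one_plus_var_times_def)
  qed (simp add: ms_mult_infinite_support one_plus_var_times_def)
qed

lemma sum_lowered_exponents:
  fixes e :: "nat \<Rightarrow> nat" and F :: "(nat \<Rightarrow> nat) \<Rightarrow> (nat \<Rightarrow> nat) \<Rightarrow> int"
  assumes "1 \<le> e i"
  shows "(\<Sum>d\<in>{d. (\<forall>j. d j \<le> e j) \<and> 1 \<le> d i}. F (d(i := d i - 1)) (\<lambda>j. e j - d j)) =
         (\<Sum>d\<in>{d. \<forall>j. d j \<le> (e(i := e i - 1)) j}. F d (\<lambda>j. (e(i := e i - 1)) j - d j))"
proof (rule sum.reindex_bij_witness[where j = "\<lambda>d. d(i := d i - 1)" and i = "\<lambda>d. d(i := d i + 1)"])
  fix d assume d: "d \<in> {d. (\<forall>j. d j \<le> e j) \<and> 1 \<le> d i}"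
  show "(d(i := d i - 1))(i := (d(i := d i - 1)) i + 1) = d" using d by auto
  have "d i \<le> e i" using d by blast
  then show "d(i := d i - 1) \<in> {d. \<forall>j. d j \<le> (e(i := e i - 1)) j}" using d by (auto simp: diff_le_mono)
  have "(\<lambda>j. (e(i := e i - 1)) j - (d(i := d i - 1)) j) = (\<lambda>j. e j - d j)"
    using d by (auto intro!: ext)
  then show "F (d(i := d i - 1)) (\<lambda>j. (e(i := e i - 1)) j - (d(i := d i - 1)) j) =
             F (d(i := d i - 1)) (\<lambda>j. e j - d j)" by simp
next
  fix d assume d: "d \<in> {d. \<forall>j. d j \<le> (e(i := e i - 1)) j}"
  show "(d(i := d i + 1))(i := (d(i := d i + 1)) i - 1) = d" by auto
  have "(d(i := d i + 1)) j \<le> e j" for j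
    using d assms by (cases "j = i") (auto dest: spec[of _ j])
  then show "d(i := d i + 1) \<in> {d. (\<forall>j. d j \<le> e j) \<and> 1 \<le> d i}" by simp
qed

lemma ms_mult_one_plus_var_times_left:
  "ms_mult (one_plus_var_times i f) h = one_plus_var_times i (ms_mult f h)"
proof
  fix e
  show "ms_mult (one_plus_var_times i f) h e = one_plus_var_times i (ms_mult f h) e"
  proof (cases "finite {i. e i \<noteq> 0}")
    case True
    let ?D = "{d :: nat \<Rightarrow> nat. \<forall>i. d i \<le> e i}"
    have fin: "finite ?D" using finite_below[OF True] .
    have "finite {j. d j \<noteq> 0}" if "d \<in> ?D" for d
    proof (rule finite_subset[OF _ True])
      show "{j. d j \<noteq> 0} \<subseteq> {i. e i \<noteq> 0}" using that by (simp add: subset_eq) (use less_le_trans in blast)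
    qed
    then have "ms_mult (one_plus_var_times i f) h e =
          (\<Sum>d\<in>?D. f d * h (\<lambda>j. e j - d j) +
             (if 1 \<le> d i then f (d(i := d i - 1)) * h (\<lambda>j. e j - d j) else 0))"
      unfolding ms_mult_def one_plus_var_times_def by (intro sum.cong refl) (simp add: algebra_simps)
    also have "\<dots> = ms_mult f h e +
        (\<Sum>d\<in>{d\<in>?D. 1 \<le> d i}. f (d(i := d i - 1)) * h (\<lambda>j. e j - d j))"
      unfolding ms_mult_def by (simp only: sum.distrib sum.inter_filter[OF fin])
    also have "(\<Sum>d\<in>{d\<in>?D. 1 \<le> d i}. f (d(i := d i - 1)) * h (\<lambda>j. e j - d j)) =
        (if 1 \<le> e i then ms_mult f h (e(i := e i - 1)) else 0)"
    proof (cases "1 \<le> e i")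
      case True
      then show ?thesis
        using sum_lowered_exponents[of e i "\<lambda>d e. f d * h e"] unfolding ms_mult_def by simp
    next
      case False
      then have "\<not> 1 \<le> d i" if "d \<in> ?D" for d using that by (metis le_trans mem_Collect_eq)
      then have empty: "{d\<in>?D. 1 \<le> d i} = {}" by blast
      show ?thesis unfolding empty using False by simp
    qed
    finally show ?thesis using True by (simp add: one_plus_var_times_def)
  qed (simp add: ms_mult_infinite_support one_plus_var_times_def)
qed

lemma ms_mult_one_minus_sum:
  assumes fin: "finite {i. e i \<noteq> 0}"
  shows "ms_mult (one_minus_sum k) h e = h e - (\<Sum>i<k. if 1 \<le> e i then h (e(i := e i - 1)) else 0)"
proof -
  let ?D = "{d :: nat \<Rightarrow> nat. \<forall>i. d i \<le> e i}"
  have finD: "finite ?D" using finite_below[OF fin] .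
  have one: "(\<Sum>d\<in>?D. ms_one d * h (\<lambda>j. e j - d j)) = h e"
  proof -
    have "(\<Sum>d\<in>?D. ms_one d * h (\<lambda>j. e j - d j)) = (\<Sum>d\<in>?D. if d = (\<lambda>_. 0) then h e else 0)"
      by (intro sum.cong refl) (simp add: ms_one_def)
    then show ?thesis using finD by simp
  qed
  have var: "(\<Sum>d\<in>?D. ms_var i d * h (\<lambda>j. e j - d j)) = (if 1 \<le> e i then h (e(i := e i - 1)) else 0)" for i
  proof -
    let ?u = "(\<lambda>_. 0 :: nat)(i := 1)"
    have "(\<lambda>j. e j - ?u j) = e(i := e i - 1)" by auto
    then have "(\<Sum>d\<in>?D. ms_var i d * h (\<lambda>j. e j - d j)) = (\<Sum>d\<in>?D. if d = ?u then h (e(i := e i - 1)) else 0)"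
      by (intro sum.cong refl) (simp add: ms_var_def)
    then show ?thesis using finD by simp
  qed
  have "ms_mult (one_minus_sum k) h e =
        (\<Sum>d\<in>?D. ms_one d * h (\<lambda>j. e j - d j) - (\<Sum>i<k. ms_var i d * h (\<lambda>j. e j - d j)))"
    unfolding ms_mult_def one_minus_sum_def by (simp add: left_diff_distrib sum_distrib_right)
  also have "\<dots> = h e - (\<Sum>i<k. \<Sum>d\<in>?D. ms_var i d * h (\<lambda>j. e j - d j))"
    by (simp only: sum_subtractf one) (simp add: sum.swap[of _ ?D])
  finally show ?thesis by (simp only: var)
qed

subsection \<open>Uniqueness of inverses\<close>

definition total_degree :: "(nat \<Rightarrow> nat) \<Rightarrow> nat" where
  "total_degree e = sum e {i. e i \<noteq> 0}"

lemma total_degree_diff_less: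
  assumes fin: "finite {i. e i \<noteq> 0}" and d: "\<forall>i. d i \<le> e i" and nz: "d \<noteq> (\<lambda>_. 0)"
  shows "total_degree (\<lambda>j. e j - d j) < total_degree e"
proof -
  let ?S = "{i. e i \<noteq> 0}"
  have "total_degree (\<lambda>j. e j - d j) = sum (\<lambda>j. e j - d j) ?S"
    unfolding total_degree_def by (rule sum.mono_neutral_left[OF fin]) auto
  also have "\<dots> < sum e ?S"
  proof (rule sum_strict_mono_ex1[OF fin])
    obtain i where "d i \<noteq> 0" using nz by auto
    then show "\<exists>a\<in>?S. e a - d a < e a" using d by (intro bexI[of _ i]) (auto dest: spec[of _ i])
  qed simp
  finally show ?thesis unfolding total_degree_def .
qed

lemma ms_mult_eq_0_imp_eq_0:
  assumes f0: "f (\<lambda>_. 0) = 1" and fh: "\<And>e. finite {i. e i \<noteq> 0} \<Longrightarrow> ms_mult f h e = 0"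
  shows "finite {i. e i \<noteq> 0} \<Longrightarrow> h e = 0"
proof (induction "total_degree e" arbitrary: e rule: less_induct)
  case less
  let ?D = "{d :: nat \<Rightarrow> nat. \<forall>i. d i \<le> e i}" and ?z = "\<lambda>_. 0 :: nat"
  have "0 = ms_mult f h e" using fh[OF less.prems] by simp
  also have "\<dots> = f ?z * h (\<lambda>j. e j - ?z j) + (\<Sum>d\<in>?D - {?z}. f d * h (\<lambda>j. e j - d j))"
    unfolding ms_mult_def by (rule sum.remove[OF finite_below[OF less.prems]]) simp
  also have "(\<Sum>d\<in>?D - {?z}. f d * h (\<lambda>j. e j - d j)) = 0"
    using less.hyps[OF total_degree_diff_less[OF less.prems]] finite_support_diff[OF less.prems]
    by (intro sum.neutral) auto
  finally show ?case using f0 by simp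
qed

lemma ms_inverse_eqI:
  assumes f0: "f (\<lambda>_. 0) = 1" and g: "ms_mult f g = ms_one"
    and g_infinite: "\<And>e. infinite {i. e i \<noteq> 0} \<Longrightarrow> g e = 0"
  shows "ms_inverse f = g"
  unfolding ms_inverse_def
proof (rule the_equality)
  fix g' assume g': "ms_mult f g' = ms_one \<and> (\<forall>e. infinite {i. e i \<noteq> 0} \<longrightarrow> g' e = 0)"
  have "ms_mult f (\<lambda>e. g' e - g e) e = ms_mult f g' e - ms_mult f g e" for e
    unfolding ms_mult_def by (simp add: right_diff_distrib sum_subtractf)
  then have "finite {i. e i \<noteq> 0} \<Longrightarrow> g' e - g e = 0" for e
    using ms_mult_eq_0_imp_eq_0[where f = f and h = "\<lambda>e. g' e - g e"] f0 g g' by simp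
  then show "g' = g" using g' g_infinite by fastforce
qed (use g g_infinite in blast)

lemma denom_Suc_one_plus_var_times: "denom (Suc j) k = one_plus_var_times j (denom j k)"
  by (simp add: ms_mult_one_plus_var)

lemma ms_var_at_0: "ms_var i (\<lambda>_. 0) = 0"
  unfolding ms_var_def by (metis fun_upd_same zero_neq_one)

lemma denom_at_0: "denom j k (\<lambda>_. 0) = 1"
proof (induction j)
  case 0
  show ?case by (simp add: one_minus_sum_def ms_one_def ms_var_at_0)
next
  case (Suc j)
  then show ?case by (simp only: denom_Suc_one_plus_var_times) (simp add: one_plus_var_times_def)
qed

subsection \<open>The generating series of \<open>|D_j|\<close>\<close>

definition D_series :: "nat \<Rightarrow> nat \<Rightarrow> mser" where
  "D_series k j = (\<lambda>e. if \<forall>i\<ge>k. e i = 0 then int (card (D_a j (map e [0..<k]))) else 0)"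

lemma D_series_infinite_support: "infinite {i. e i \<noteq> 0} \<Longrightarrow> D_series k j e = 0"
proof -
  assume inf: "infinite {i. e i \<noteq> 0}"
  have "\<not> (\<forall>i\<ge>k. e i = 0)"
  proof
    assume "\<forall>i\<ge>k. e i = 0"
    then have "{i. e i \<noteq> 0} \<subseteq> {..<k}" by (auto simp: not_less[symmetric])
    then show False using inf finite_subset by blast
  qed
  then show ?thesis unfolding D_series_def by (rule if_not_P)
qed

lemma map_fun_upd: "i < k \<Longrightarrow> map (e(i := x)) [0..<k] = (map e [0..<k])[i := x]"
  by (rule nth_equalityI) auto

lemma D_a_0: "D_a 0 a = S_a a"
  by (simp add: D_a_def)

lemma D_series_0_coeff:
  assumes e: "\<forall>i\<ge>k. e i = 0"
  shows "D_series k 0 e - (\<Sum>i<k. if 1 \<le> e i then D_series k 0 (e(i := e i - 1)) else 0) = ms_one e"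
proof -
  let ?l = "map e [0..<k]"
  have at_e: "D_series k 0 e = int (card (S_a ?l))" using e by (simp add: D_series_def D_a_0)
  have lowered: "D_series k 0 (e(i := e i - 1)) = int (card (S_a (dec_part ?l i)))" if "i < k" for i
    using e that by (simp add: D_series_def D_a_0 map_fun_upd)
  have "(\<Sum>i<k. if 1 \<le> e i then D_series k 0 (e(i := e i - 1)) else 0) =
        (\<Sum>i<k. if 1 \<le> ?l ! i then int (card (S_a (dec_part ?l i))) else 0)"
    using lowered by (intro sum.cong) auto
  also have "\<dots> = (\<Sum>i\<in>{i\<in>{..<k}. 1 \<le> ?l ! i}. int (card (S_a (dec_part ?l i))))"
    by (rule sum.inter_filter[symmetric]) simp
  also have "{i\<in>{..<k}. 1 \<le> ?l ! i} = {i. i < length ?l \<and> 1 \<le> ?l ! i}" by auto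
  finally have lowered_sum: "(\<Sum>i<k. if 1 \<le> e i then D_series k 0 (e(i := e i - 1)) else 0) =
      (\<Sum>i | i < length ?l \<and> 1 \<le> ?l ! i. int (card (S_a (dec_part ?l i))))" .
  show ?thesis
  proof (cases "sum_list ?l = 0")
    case True
    then have "\<forall>i<k. e i = 0" by (simp add: sum_list_eq_0_iff)
    then have "e = (\<lambda>_. 0)" using e by (intro ext) (metis not_le)
    then show ?thesis using at_e card_S_a_sum_list_0[OF True] by (simp add: ms_one_def)
  next
    case False
    then have "e \<noteq> (\<lambda>_. 0)" by (auto simp: sum_list_eq_0_iff)
    then show ?thesis using at_e lowered_sum card_S_a_recurrence[OF False] by (simp add: ms_one_def)
  qed
qed

lemma one_minus_sum_mult_D_series_0: "ms_mult (one_minus_sum k) (D_series k 0) = ms_one"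
proof
  fix e
  show "ms_mult (one_minus_sum k) (D_series k 0) e = ms_one e"
  proof (cases "finite {i. e i \<noteq> 0}")
    case True
    show ?thesis
    proof (cases "\<forall>i\<ge>k. e i = 0")
      case False
      then obtain i0 where i0: "k \<le> i0" "e i0 \<noteq> 0" by auto
      have "D_series k 0 e = 0" using False unfolding D_series_def by (rule if_not_P)
      moreover have "(\<Sum>i<k. if 1 \<le> e i then D_series k 0 (e(i := e i - 1)) else 0) = 0"
      proof (intro sum.neutral ballI)
        fix i assume "i \<in> {..<k}"
        then have outside: "\<not> (\<forall>i'\<ge>k. (e(i := e i - 1)) i' = 0)" using i0 by auto
        show "(if 1 \<le> e i then D_series k 0 (e(i := e i - 1)) else 0) = 0"
          unfolding D_series_def if_not_P[OF outside] by simp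
      qed
      moreover have "e \<noteq> (\<lambda>_. 0)" using i0 by auto
      ultimately show ?thesis using ms_mult_one_minus_sum[OF True] by (simp add: ms_one_def)
    qed (use ms_mult_one_minus_sum[OF True] D_series_0_coeff in simp)
  qed (auto simp: ms_mult_infinite_support ms_one_def)
qed

lemma D_series_Suc: "j < k \<Longrightarrow> D_series k j = one_plus_var_times j (D_series k (Suc j))"
proof
  fix e assume "j < k"
  show "D_series k j e = one_plus_var_times j (D_series k (Suc j)) e"
  proof (cases "finite {i. e i \<noteq> 0} \<and> (\<forall>i\<ge>k. e i = 0)")
    case True
    then show ?thesis using card_D_a_recurrence[of j "map e [0..<k]"] \<open>j < k\<close>
      by (auto simp: D_series_def one_plus_var_times_def map_fun_upd)
  qed (use \<open>j < k\<close> D_series_infinite_support in \<open>auto simp: D_series_def one_plus_var_times_def\<close>)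
qed

lemma denom_mult_D_series: "j \<le> k \<Longrightarrow> ms_mult (denom j k) (D_series k j) = ms_one"
proof (induction j)
  case 0
  then show ?case using one_minus_sum_mult_D_series_0 by simp
next
  case (Suc j)
  then have "ms_one = ms_mult (denom j k) (one_plus_var_times j (D_series k (Suc j)))"
    using D_series_Suc[of j k] by simp
  also have "\<dots> = ms_mult (denom (Suc j) k) (D_series k (Suc j))"
    by (simp only: ms_mult_one_plus_var_times_right ms_mult_one_plus_var_times_left denom_Suc_one_plus_var_times)
  finally show ?case by simp
qed

theorem mainTheorem1:
  fixes a :: "nat list" and j :: nat
  assumes "j \<le> length a"
  shows "int (card (D_a j a)) = ms_inverse (denom j (length a)) (expvec a)"
proof -
  have "ms_inverse (denom j (length a)) = D_series (length a) j"
    by (rule ms_inverse_eqI[OF denom_at_0 denom_mult_D_series[OF assms] D_series_infinite_support])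
  moreover have "map (expvec a) [0..<length a] = a"
    by (rule nth_equalityI) (auto simp: expvec_def)
  ultimately show ?thesis by (simp add: D_series_def expvec_def)
qed

end
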